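(* Let $\mathcal{H}$ be a right quaternionic Hilbert space and let $T_1,T_2\in\mathcal{B}_R(\mathcal{H})$ be normal operators. If $S\in\mathcal{B}_R(\mathcal{H})$ satisfies $T_1S=ST_2$, then $T_1^*S=ST_2^*$.
   Context: $\mathcal{H}$ is a right quaternionic Hilbert space (a right vector space over the quaternions $\mathbb{H}$ with a Hermitian quaternionic scalar product $\langle\cdot,\cdot\rangle$, right linear in the first argument, $\overline{\langle x,y\rangle}=\langle y,x\rangle$, positive definite, complete). $\mathcal{B}_R(\mathcal{H})$ is the set of bounded right linear operators $T$ on $\mathcal{H}$ ($T(xq+y)=(Tx)q+Ty$), $T^*$ is the adjoint ($\langle Tx,y\rangle=\langle x,T^*y\rangle$), and $T$ is normal if $TT^*=T^*T$. *)

theory Defs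
  imports "HOL-Analysis.Analysis"
begin

datatype quat = Quat (qRe: real) (qI: real) (qJ: real) (qK: real)

instantiation quat :: "{zero, one, plus, minus, uminus, times}"
begin
definition "0 = Quat 0 0 0 0"
definition "1 = Quat 1 0 0 0"
definition "p + q = Quat (qRe p + qRe q) (qI p + qI q) (qJ p + qJ q) (qK p + qK q)"
definition "p - q = Quat (qRe p - qRe q) (qI p - qI q) (qJ p - qJ q) (qK p - qK q)"
definition "- q = Quat (- qRe q) (- qI q) (- qJ q) (- qK q)"
definition "p * q = Quat
   (qRe p * qRe q - qI p * qI q - qJ p * qJ q - qK p * qK q)
   (qRe p * qI q + qI p * qRe q + qJ p * qK q - qK p * qJ q)
   (qRe p * qJ q - qI p * qK q + qJ p * qRe q + qK p * qI q)
   (qRe p * qK q + qI p * qJ q - qJ p * qI q + qK p * qRe q)"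
instance ..
end

definition qcnj :: "quat \<Rightarrow> quat" where
  "qcnj q = Quat (qRe q) (- qI q) (- qJ q) (- qK q)"

definition qnorm :: "('h \<Rightarrow> 'h \<Rightarrow> quat) \<Rightarrow> 'h \<Rightarrow> real" where
  "qnorm ip x = sqrt (qRe (ip x x))"

text \<open>smul x q is the right scalar multiplication x q; ip is the scalar product,
  right linear in the first argument.\<close>
definition right_quat_hilbert ::
  "('h::ab_group_add \<Rightarrow> quat \<Rightarrow> 'h) \<Rightarrow> ('h \<Rightarrow> 'h \<Rightarrow> quat) \<Rightarrow> bool" where
  "right_quat_hilbert smul ip \<longleftrightarrow>
     \<comment> \<open>right vector space over H\<close>
     (\<forall>x y q. smul (x + y) q = smul x q + smul y q) \<and>
     (\<forall>x p q. smul x (p + q) = smul x p + smul x q) \<and>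
     (\<forall>x p q. smul x (p * q) = smul (smul x p) q) \<and>
     (\<forall>x. smul x 1 = x) \<and>
     \<comment> \<open>Hermitian quaternionic scalar product\<close>
     (\<forall>x y z q. ip (smul x q + y) z = ip x z * q + ip y z) \<and>
     (\<forall>x y. qcnj (ip x y) = ip y x) \<and>
     (\<forall>x. qI (ip x x) = 0 \<and> qJ (ip x x) = 0 \<and> qK (ip x x) = 0 \<and> qRe (ip x x) \<ge> 0) \<and>
     (\<forall>x. ip x x = 0 \<longrightarrow> x = 0) \<and>
     \<comment> \<open>completeness w.r.t. the induced norm\<close>
     (\<forall>X :: nat \<Rightarrow> 'h.
        (\<forall>e>0. \<exists>N. \<forall>m\<ge>N. \<forall>n\<ge>N. qnorm ip (X m - X n) < e) \<longrightarrow>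
        (\<exists>L. (\<lambda>n. qnorm ip (X n - L)) \<longlonglongrightarrow> 0))"

definition bounded_right_linear ::
  "('h::ab_group_add \<Rightarrow> quat \<Rightarrow> 'h) \<Rightarrow> ('h \<Rightarrow> 'h \<Rightarrow> quat) \<Rightarrow> ('h \<Rightarrow> 'h) \<Rightarrow> bool" where
  "bounded_right_linear smul ip T \<longleftrightarrow>
     (\<forall>x y q. T (smul x q + y) = smul (T x) q + T y) \<and>
     (\<exists>C. \<forall>x. qnorm ip (T x) \<le> C * qnorm ip x)"

definition qadjoint :: "('h \<Rightarrow> 'h \<Rightarrow> quat) \<Rightarrow> ('h \<Rightarrow> 'h) \<Rightarrow> ('h \<Rightarrow> 'h)" where
  "qadjoint ip T = (THE A. \<forall>x y. ip (T x) y = ip x (A y))"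

definition qnormal :: "('h \<Rightarrow> 'h \<Rightarrow> quat) \<Rightarrow> ('h \<Rightarrow> 'h) \<Rightarrow> bool" where
  "qnormal ip T \<longleftrightarrow> T \<circ> qadjoint ip T = qadjoint ip T \<circ> T"

end

theory Submission
  imports Defs "HOL-Complex_Analysis.Complex_Analysis"
begin

text \<open>
  Rosenblum's proof of the Fuglede--Putnam theorem. Right multiplication by the quaternions
  \<open>a + b i\<close> makes the space a complex Hilbert space, whose inner product is the
  \<open>1, i\<close>-part of the quaternionic one, and right linear operators are complex linear for
  this structure. If \<open>T1 S = S T2\<close> with \<open>T1, T2\<close> normal, then
  \<open>F w = exp (w T1*) S exp (- w T2*) = exp (w T1* - cnj w T1) S exp (cnj w T2 - w T2*)\<close>
  is an entire function bounded by the norm of \<open>S\<close>: normality lets the exponentials be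
  merged, and the merged exponents are skew-adjoint, so the exponentials are unitary. Cauchy's
  estimate on large circles then shows \<open>F' 0 = T1* S - S T2* = 0\<close>.

  Since the space is only given through its scalar product, \<open>exp (w A)\<close> is replaced by the
  polynomial \<open>(1 + w A / n) ^ n\<close>; unitarity survives as the bound
  \<open>1 + 5 \<bar>w\<bar>\<^sup>2 \<parallel>N\<parallel>\<^sup>2\<close> on \<open>(1 + w N*) (1 - cnj w N)\<close>, and the
  imperfect inverse \<open>(1 - cnj w N) (1 + cnj w N) = 1 - (cnj w)\<^sup>2 N\<^sup>2\<close> costs
  a second-order term. Both errors vanish as \<open>n \<rightarrow> \<infinity>\<close>. The adjoints themselves come
  from the Riesz representation theorem, proved by minimising \<open>\<parallel>x\<parallel>\<^sup>2 / 2 - g x\<close>.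
\<close>

section \<open>Quaternions\<close>

lemma quat_eqI:
  "qRe p = qRe q \<Longrightarrow> qI p = qI q \<Longrightarrow> qJ p = qJ q \<Longrightarrow> qK p = qK q \<Longrightarrow> p = q"
  by (cases p; cases q) auto

lemma quat_components [simp]:
  "qRe 0 = 0" "qI 0 = 0" "qJ 0 = 0" "qK 0 = 0"
  "qRe 1 = 1" "qI 1 = 0" "qJ 1 = 0" "qK 1 = 0"
  "qRe (p + q) = qRe p + qRe q" "qI (p + q) = qI p + qI q"
  "qJ (p + q) = qJ p + qJ q" "qK (p + q) = qK p + qK q"
  "qRe (p - q) = qRe p - qRe q" "qI (p - q) = qI p - qI q"
  "qJ (p - q) = qJ p - qJ q" "qK (p - q) = qK p - qK q"
  "qRe (- q) = - qRe q" "qI (- q) = - qI q" "qJ (- q) = - qJ q" "qK (- q) = - qK q"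
  "qRe (p * q) = qRe p * qRe q - qI p * qI q - qJ p * qJ q - qK p * qK q"
  "qI (p * q) = qRe p * qI q + qI p * qRe q + qJ p * qK q - qK p * qJ q"
  "qJ (p * q) = qRe p * qJ q - qI p * qK q + qJ p * qRe q + qK p * qI q"
  "qK (p * q) = qRe p * qK q + qI p * qJ q - qJ p * qI q + qK p * qRe q"
  "qRe (qcnj q) = qRe q" "qI (qcnj q) = - qI q" "qJ (qcnj q) = - qJ q" "qK (qcnj q) = - qK q"
  unfolding zero_quat_def one_quat_def plus_quat_def minus_quat_def uminus_quat_def
    times_quat_def qcnj_def
  by simp_all

instance quat :: ring_1
proof
  show "(0::quat) \<noteq> 1"
    by (metis quat_components(1,5) zero_neq_one)
qed (rule quat_eqI; simp add: algebra_simps)+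

lemma qcnj_mult: "qcnj (p * q) = qcnj q * qcnj p"
  by (rule quat_eqI) (simp_all add: algebra_simps)

lemma qcnj_add: "qcnj (p + q) = qcnj p + qcnj q"
  by (rule quat_eqI) simp_all

lemma qRe_mult_commute: "qRe (p * q) = qRe (q * p)"
  by (simp add: algebra_simps)

definition quat_of_complex :: "complex \<Rightarrow> quat" where
  "quat_of_complex z = Quat (Re z) (Im z) 0 0"

lemma quat_of_complex_components [simp]:
  "qRe (quat_of_complex z) = Re z" "qI (quat_of_complex z) = Im z"
  "qJ (quat_of_complex z) = 0" "qK (quat_of_complex z) = 0"
  by (simp_all add: quat_of_complex_def)

lemma quat_of_complex_mult: "quat_of_complex (z * w) = quat_of_complex z * quat_of_complex w"
  by (rule quat_eqI) (simp_all add: algebra_simps)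

lemma quat_of_complex_add: "quat_of_complex (z + w) = quat_of_complex z + quat_of_complex w"
  by (rule quat_eqI) simp_all

lemma quat_of_complex_1 [simp]: "quat_of_complex 1 = 1"
  by (rule quat_eqI) simp_all

lemma qcnj_quat_of_complex: "qcnj (quat_of_complex z) = quat_of_complex (cnj z)"
  by (rule quat_eqI) simp_all

section \<open>Right quaternionic Hilbert spaces\<close>

definition right_linear :: "('h::ab_group_add \<Rightarrow> quat \<Rightarrow> 'h) \<Rightarrow> ('h \<Rightarrow> 'h) \<Rightarrow> bool" where
  "right_linear smul T \<longleftrightarrow> (\<forall>x y q. T (smul x q + y) = smul (T x) q + T y)"

locale quat_hilbert =
  fixes smul :: "'h::ab_group_add \<Rightarrow> quat \<Rightarrow> 'h" and ip :: "'h \<Rightarrow> 'h \<Rightarrow> quat"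
  assumes hilbert: "right_quat_hilbert smul ip"
begin

lemma smul_add: "smul (x + y) q = smul x q + smul y q"
  using hilbert by (simp add: right_quat_hilbert_def)

lemma smul_scalar_add: "smul x (p + q) = smul x p + smul x q"
  using hilbert by (simp add: right_quat_hilbert_def)

lemma smul_smul: "smul (smul x p) q = smul x (p * q)"
  using hilbert by (simp add: right_quat_hilbert_def)

lemma smul_one [simp]: "smul x 1 = x"
  using hilbert by (simp add: right_quat_hilbert_def)

lemma ip_smul_add_left: "ip (smul x q + y) z = ip x z * q + ip y z"
  using hilbert by (simp add: right_quat_hilbert_def)

lemma qcnj_ip: "qcnj (ip x y) = ip y x"
  using hilbert by (simp add: right_quat_hilbert_def)

lemma ip_self_components [simp]:
  "qI (ip x x) = 0" "qJ (ip x x) = 0" "qK (ip x x) = 0" "0 \<le> qRe (ip x x)"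
  using hilbert by (simp_all add: right_quat_hilbert_def)

lemma ip_self_eq_0: "ip x x = 0 \<Longrightarrow> x = 0"
  using hilbert by (simp add: right_quat_hilbert_def)

lemma qnorm_Cauchy_convergent:
  assumes "\<forall>e>0. \<exists>N. \<forall>m\<ge>N. \<forall>n\<ge>N. qnorm ip (X m - X n) < e"
  shows "\<exists>L. (\<lambda>n. qnorm ip (X n - L)) \<longlonglongrightarrow> 0"
  using hilbert assms unfolding right_quat_hilbert_def by blast

lemma smul_zero [simp]: "smul 0 q = 0"
  using smul_add[of 0 0 q] by simp

lemma smul_scalar_zero [simp]: "smul x 0 = 0"
  using smul_scalar_add[of x 0 0] by simp

lemma smul_minus: "smul (- x) q = - smul x q"
  using smul_add[of "- x" x q] by (simp add: eq_neg_iff_add_eq_0)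

lemma smul_diff: "smul (x - y) q = smul x q - smul y q"
  using smul_add[of x "- y" q] by (simp add: smul_minus)

lemma ip_add_left: "ip (x + y) z = ip x z + ip y z"
  using ip_smul_add_left[of x 1 y z] by simp

lemma ip_zero_left [simp]: "ip 0 z = 0"
  using ip_add_left[of 0 0 z] by simp

lemma ip_smul_left: "ip (smul x q) z = ip x z * q"
  using ip_smul_add_left[of x q 0 z] by simp

lemma ip_minus_left: "ip (- x) z = - ip x z"
  using ip_add_left[of "- x" x z] by (simp add: eq_neg_iff_add_eq_0)

lemma ip_diff_left: "ip (x - y) z = ip x z - ip y z"
  using ip_add_left[of x "- y" z] by (simp add: ip_minus_left)

lemma ip_add_right: "ip z (x + y) = ip z x + ip z y"
  using qcnj_ip[of "x + y" z] by (simp add: ip_add_left qcnj_add qcnj_ip)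

lemma ip_smul_right: "ip z (smul x q) = qcnj q * ip z x"
  using qcnj_ip[of "smul x q" z] by (simp add: ip_smul_left qcnj_mult qcnj_ip)

lemma ip_zero_right [simp]: "ip z 0 = 0"
  using ip_add_right[of z 0 0] by simp

lemma ip_minus_right: "ip z (- x) = - ip z x"
  using ip_add_right[of z "- x" x] by (simp add: eq_neg_iff_add_eq_0)

lemma ip_diff_right: "ip z (x - y) = ip z x - ip z y"
  using ip_add_right[of z x "- y"] by (simp add: ip_minus_right)

definition re_ip :: "'h \<Rightarrow> 'h \<Rightarrow> real" where
  "re_ip x y = qRe (ip x y)"

lemma re_ip_add_left: "re_ip (x + y) z = re_ip x z + re_ip y z"
  by (simp add: re_ip_def ip_add_left)

lemma re_ip_add_right: "re_ip z (x + y) = re_ip z x + re_ip z y"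
  by (simp add: re_ip_def ip_add_right)

lemma re_ip_diff_left: "re_ip (x - y) z = re_ip x z - re_ip y z"
  by (simp add: re_ip_def ip_diff_left)

lemma re_ip_diff_right: "re_ip z (x - y) = re_ip z x - re_ip z y"
  by (simp add: re_ip_def ip_diff_right)

lemma re_ip_commute: "re_ip x y = re_ip y x"
  by (metis re_ip_def qcnj_ip quat_components(25))

lemma re_ip_self_nonneg: "0 \<le> re_ip x x"
  by (simp add: re_ip_def)

lemma re_ip_self_eq_0: "re_ip x x = 0 \<Longrightarrow> x = 0"
  by (rule ip_self_eq_0, rule quat_eqI) (simp_all add: re_ip_def)

lemma re_ip_add_self: "re_ip (x + y) (x + y) = re_ip x x + 2 * re_ip x y + re_ip y y"
  by (simp add: re_ip_add_left re_ip_add_right re_ip_commute[of y x])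

lemma re_ip_diff_self: "re_ip (x - y) (x - y) = re_ip x x - 2 * re_ip x y + re_ip y y"
  by (simp add: re_ip_diff_left re_ip_diff_right re_ip_commute[of y x])

lemma qnorm_eq_sqrt_re_ip: "qnorm ip x = sqrt (re_ip x x)"
  by (simp add: qnorm_def re_ip_def)

lemma qnorm_nonneg: "0 \<le> qnorm ip x"
  by (simp add: qnorm_eq_sqrt_re_ip re_ip_self_nonneg)

lemma qnorm_power2: "qnorm ip x ^ 2 = re_ip x x"
  by (simp add: qnorm_eq_sqrt_re_ip re_ip_self_nonneg)

lemma qnorm_zero [simp]: "qnorm ip 0 = 0"
  by (simp add: qnorm_def)

lemma qnorm_minus: "qnorm ip (- x) = qnorm ip x"
  by (simp add: qnorm_def ip_minus_left ip_minus_right)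

lemma qnorm_minus_commute: "qnorm ip (x - y) = qnorm ip (y - x)"
  by (metis minus_diff_eq qnorm_minus)

definition csmul :: "complex \<Rightarrow> 'h \<Rightarrow> 'h" where
  "csmul z x = smul x (quat_of_complex z)"

lemma csmul_add: "csmul z (x + y) = csmul z x + csmul z y"
  by (simp add: csmul_def smul_add)

lemma csmul_scalar_add: "csmul (z + w) x = csmul z x + csmul w x"
  by (simp add: csmul_def quat_of_complex_add smul_scalar_add)

lemma csmul_csmul: "csmul z (csmul w x) = csmul (z * w) x"
  by (simp add: csmul_def smul_smul quat_of_complex_mult mult.commute)

lemma csmul_one [simp]: "csmul 1 x = x"
  by (simp add: csmul_def)

lemma csmul_zero [simp]: "csmul z 0 = 0"
  by (simp add: csmul_def)

lemma csmul_zero_scalar [simp]: "csmul 0 x = 0"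
proof -
  have "quat_of_complex 0 = 0"
    by (rule quat_eqI) simp_all
  then show ?thesis
    by (simp add: csmul_def)
qed

lemma csmul_minus: "csmul z (- x) = - csmul z x"
  by (simp add: csmul_def smul_minus)

lemma csmul_diff: "csmul z (x - y) = csmul z x - csmul z y"
  by (simp add: csmul_def smul_diff)

lemma csmul_uminus_scalar: "csmul (- z) x = - csmul z x"
proof -
  have "quat_of_complex (- z) = - quat_of_complex z"
    by (rule quat_eqI) simp_all
  moreover have "smul y (- q) = - smul y q" for y q
    using smul_scalar_add[of y "- q" q] by (simp add: eq_neg_iff_add_eq_0)
  ultimately show ?thesis
    by (simp add: csmul_def)
qed

lemma re_ip_csmul_real_left: "re_ip (csmul (of_real c) x) y = c * re_ip x y"
  by (simp add: re_ip_def csmul_def ip_smul_left)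

lemma re_ip_csmul_real_right: "re_ip y (csmul (of_real c) x) = c * re_ip y x"
  by (simp add: re_ip_def csmul_def ip_smul_right)

lemma re_ip_csmul_right: "re_ip x (csmul w y) = re_ip (csmul (cnj w) x) y"
  by (simp add: re_ip_def csmul_def ip_smul_left ip_smul_right qcnj_quat_of_complex qRe_mult_commute)

lemma re_ip_csmul_self: "re_ip (csmul z x) (csmul z x) = (cmod z)\<^sup>2 * re_ip x x"
proof -
  have "(cmod z)\<^sup>2 = Re z * Re z + Im z * Im z"
    using cmod_power2[of z] by (simp add: power2_eq_square)
  then show ?thesis
    by (simp add: re_ip_def csmul_def ip_smul_left ip_smul_right) (simp add: algebra_simps)
qed

lemma qnorm_csmul: "qnorm ip (csmul z x) = cmod z * qnorm ip x"
  by (simp add: qnorm_eq_sqrt_re_ip re_ip_csmul_self real_sqrt_mult)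

lemma re_ip_cauchy_schwarz: "\<bar>re_ip x y\<bar> \<le> qnorm ip x * qnorm ip y"
proof (cases "y = 0")
  case True
  then show ?thesis
    by (simp add: re_ip_def)
next
  case False
  then have yy: "re_ip y y > 0"
    using re_ip_self_eq_0 re_ip_self_nonneg by (metis less_eq_real_def)
  define t where "t = re_ip x y / re_ip y y"
  have "0 \<le> re_ip (x - csmul (of_real t) y) (x - csmul (of_real t) y)"
    by (rule re_ip_self_nonneg)
  also have "\<dots> = re_ip x x - 2 * t * re_ip x y + t * t * re_ip y y"
    by (simp add: re_ip_diff_self re_ip_csmul_real_left re_ip_csmul_real_right)
  also have "\<dots> = re_ip x x - (re_ip x y)\<^sup>2 / re_ip y y"
    using yy by (simp add: t_def power2_eq_square field_simps)
  finally have "(re_ip x y)\<^sup>2 \<le> re_ip x x * re_ip y y"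
    using yy by (simp add: field_simps)
  then have "sqrt ((re_ip x y)\<^sup>2) \<le> sqrt (re_ip x x * re_ip y y)"
    by (rule real_sqrt_le_mono)
  then show ?thesis
    by (simp add: qnorm_eq_sqrt_re_ip real_sqrt_mult)
qed

lemma qnorm_triangle: "qnorm ip (x + y) \<le> qnorm ip x + qnorm ip y"
proof -
  have "(qnorm ip (x + y))\<^sup>2 = re_ip x x + 2 * re_ip x y + re_ip y y"
    by (simp add: qnorm_power2 re_ip_add_self)
  also have "\<dots> \<le> (qnorm ip x)\<^sup>2 + 2 * (qnorm ip x * qnorm ip y) + (qnorm ip y)\<^sup>2"
    using re_ip_cauchy_schwarz[of x y] by (simp add: qnorm_power2)
  also have "\<dots> = (qnorm ip x + qnorm ip y)\<^sup>2"
    by (simp add: power2_eq_square algebra_simps)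
  finally show ?thesis
    using qnorm_nonneg by (meson power2_le_imp_le add_nonneg_nonneg)
qed

lemma qnorm_diff_le: "qnorm ip (x - y) \<le> qnorm ip x + qnorm ip y"
  using qnorm_triangle[of x "- y"] by (simp add: qnorm_minus)

lemma qnorm_add_orthogonal_le:
  assumes "re_ip x v = 0" and "qnorm ip v \<le> c * qnorm ip x"
  shows "qnorm ip (x + v) \<le> (1 + c\<^sup>2) * qnorm ip x"
proof -
  have "(qnorm ip (x + v))\<^sup>2 = (qnorm ip x)\<^sup>2 + (qnorm ip v)\<^sup>2"
    using assms(1) by (simp add: qnorm_power2 re_ip_add_self)
  also have "\<dots> \<le> (qnorm ip x)\<^sup>2 + (c * qnorm ip x)\<^sup>2"
    using assms(2) qnorm_nonneg by (simp add: power_mono)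
  also have "\<dots> = (1 + c\<^sup>2) * (qnorm ip x)\<^sup>2"
    by (simp add: power_mult_distrib algebra_simps)
  also have "\<dots> \<le> (1 + c\<^sup>2)\<^sup>2 * (qnorm ip x)\<^sup>2"
    by (intro mult_right_mono self_le_power) simp_all
  also have "\<dots> = ((1 + c\<^sup>2) * qnorm ip x)\<^sup>2"
    by (simp add: power_mult_distrib)
  finally show ?thesis
    by (rule power2_le_imp_le) (simp add: qnorm_nonneg)
qed

lemma qnorm_convergent_if_diff_square_le:
  assumes diff: "\<And>k l. (qnorm ip (X k - X l))\<^sup>2 \<le> e k + e l" and "e \<longlonglongrightarrow> 0"
  shows "\<exists>L. (\<lambda>n. qnorm ip (X n - L)) \<longlonglongrightarrow> 0"
proof (rule qnorm_Cauchy_convergent, intro allI impI)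
  fix \<epsilon> :: real
  assume "0 < \<epsilon>"
  then obtain N where N: "\<And>n. N \<le> n \<Longrightarrow> \<bar>e n\<bar> < \<epsilon>\<^sup>2 / 2"
    using LIMSEQ_D[OF \<open>e \<longlonglongrightarrow> 0\<close>, of "\<epsilon>\<^sup>2 / 2"] by auto
  have "qnorm ip (X k - X l) < \<epsilon>" if "N \<le> k" "N \<le> l" for k l
  proof -
    have "(qnorm ip (X k - X l))\<^sup>2 < \<epsilon>\<^sup>2"
      using diff[of k l] N[OF that(1)] N[OF that(2)] by linarith
    then show ?thesis
      using \<open>0 < \<epsilon>\<close> by (simp add: power_less_imp_less_base)
  qed
  then show "\<exists>N. \<forall>m\<ge>N. \<forall>n\<ge>N. qnorm ip (X m - X n) < \<epsilon>"
    by blast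
qed

definition complex_ip :: "'h \<Rightarrow> 'h \<Rightarrow> complex" where
  "complex_ip x y = Complex (qRe (ip x y)) (qI (ip x y))"

lemma complex_ip_zero_left [simp]: "complex_ip 0 z = 0"
  by (simp add: complex_ip_def complex_eq_iff)

lemma complex_ip_add_left: "complex_ip (x + y) z = complex_ip x z + complex_ip y z"
  by (simp add: complex_ip_def ip_add_left complex_eq_iff)

lemma complex_ip_csmul_left: "complex_ip (csmul w x) y = complex_ip x y * w"
  by (simp add: complex_ip_def csmul_def ip_smul_left complex_eq_iff)

lemma Re_complex_ip: "Re (complex_ip x y) = re_ip x y"
  by (simp add: complex_ip_def re_ip_def)

lemma norm_complex_ip_le: "cmod (complex_ip x y) \<le> 2 * qnorm ip x * qnorm ip y"
proof -
  have "Im (complex_ip x y) = - re_ip (csmul \<i> x) y"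
    by (simp add: complex_ip_def re_ip_def csmul_def ip_smul_left)
  then have "cmod (complex_ip x y) \<le> \<bar>re_ip x y\<bar> + \<bar>re_ip (csmul \<i> x) y\<bar>"
    using cmod_le[of "complex_ip x y"] by (simp add: Re_complex_ip)
  also have "\<dots> \<le> qnorm ip x * qnorm ip y + qnorm ip x * qnorm ip y"
    using re_ip_cauchy_schwarz[of x y] re_ip_cauchy_schwarz[of "csmul \<i> x" y]
    by (simp add: qnorm_csmul)
  finally show ?thesis
    by simp
qed

lemma right_linear_add: "right_linear smul T \<Longrightarrow> T (x + y) = T x + T y"
  unfolding right_linear_def by (drule spec[of _ x], drule spec[of _ y], drule spec[of _ 1]) simp

lemma right_linear_zero: "right_linear smul T \<Longrightarrow> T 0 = 0"
  using right_linear_add[of T 0 0] by simp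

lemma right_linear_smul:
  assumes "right_linear smul T"
  shows "T (smul x q) = smul (T x) q"
  using assms right_linear_zero[OF assms] unfolding right_linear_def
  by (drule_tac spec[of _ x], drule_tac spec[of _ 0], drule_tac spec[of _ q]) simp

lemma right_linear_csmul: "right_linear smul T \<Longrightarrow> T (csmul z x) = csmul z (T x)"
  by (simp add: csmul_def right_linear_smul)

lemma right_linear_minus: "right_linear smul T \<Longrightarrow> T (- x) = - T x"
  using right_linear_add[of T "- x" x] by (simp add: right_linear_zero eq_neg_iff_add_eq_0)

lemma right_linear_diff: "right_linear smul T \<Longrightarrow> T (x - y) = T x - T y"
  using right_linear_add[of T x "- y"] by (simp add: right_linear_minus)

lemma right_linear_sum_list: "right_linear smul T \<Longrightarrow> T (sum_list xs) = (\<Sum>x\<leftarrow>xs. T x)"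
  by (induction xs) (simp_all add: right_linear_add right_linear_zero)

lemma right_linear_id: "right_linear smul id"
  by (simp add: right_linear_def)

lemma right_linear_comp: "right_linear smul T \<Longrightarrow> right_linear smul U \<Longrightarrow> right_linear smul (T \<circ> U)"
  by (simp add: right_linear_def)

lemma right_linear_uminus: "right_linear smul T \<Longrightarrow> right_linear smul (\<lambda>x. - T x)"
  unfolding right_linear_def[of smul "\<lambda>x. - T x"]
  by (simp add: right_linear_add right_linear_smul smul_minus)

definition op_bound :: "('h \<Rightarrow> 'h) \<Rightarrow> real \<Rightarrow> bool" where
  "op_bound T a \<longleftrightarrow> (\<forall>x. qnorm ip (T x) \<le> a * qnorm ip x)"

lemma op_boundD: "op_bound T a \<Longrightarrow> qnorm ip (T x) \<le> a * qnorm ip x"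
  by (simp add: op_bound_def)

lemma op_bound_comp:
  assumes "op_bound T a" "op_bound U b" "0 \<le> a"
  shows "op_bound (\<lambda>x. T (U x)) (a * b)"
  unfolding op_bound_def
proof
  fix x
  have "qnorm ip (T (U x)) \<le> a * qnorm ip (U x)"
    using assms(1) by (rule op_boundD)
  also have "\<dots> \<le> a * (b * qnorm ip x)"
    using assms by (simp add: mult_left_mono op_boundD)
  finally show "qnorm ip (T (U x)) \<le> a * b * qnorm ip x"
    by (simp add: mult.assoc)
qed

lemma op_bound_funpow:
  assumes "op_bound T a" "0 \<le> a"
  shows "op_bound (T ^^ n) (a ^ n)"
proof (induction n)
  case 0
  then show ?case
    by (simp add: op_bound_def)
next
  case (Suc n)
  then show ?case
    using op_bound_comp[OF assms(1) Suc assms(2)] by simp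
qed

lemma bounded_right_linearE:
  assumes "bounded_right_linear smul ip T"
  obtains a where "right_linear smul T" "0 \<le> a" "op_bound T a"
proof -
  obtain C where "right_linear smul T" "\<And>x. qnorm ip (T x) \<le> C * qnorm ip x"
    using assms unfolding bounded_right_linear_def right_linear_def by blast
  moreover have "C * qnorm ip x \<le> max C 0 * qnorm ip x" for x
    using qnorm_nonneg by (simp add: mult_right_mono)
  ultimately have "op_bound T (max C 0)"
    unfolding op_bound_def by (blast intro: order_trans)
  with \<open>right_linear smul T\<close> show ?thesis
    by (intro that[of "max C 0"]) simp_all
qed

end

section \<open>Riesz representation and adjoints\<close>

context quat_hilbert
begin

context
  fixes g :: "'h \<Rightarrow> real" and C :: real
  assumes g_add: "\<And>x y. g (x + y) = g x + g y"
    and g_scale: "\<And>c x. g (csmul (of_real c) x) = c * g x"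
    and g_bound: "\<And>x. \<bar>g x\<bar> \<le> C * qnorm ip x"
begin

definition riesz_energy :: "'h \<Rightarrow> real" where
  "riesz_energy x = re_ip x x / 2 - g x"

lemma riesz_energy_lower_bound: "- C\<^sup>2 / 2 \<le> riesz_energy x"
proof -
  have "g x \<le> C * qnorm ip x"
    using g_bound[of x] by simp
  moreover have "0 \<le> (qnorm ip x - C)\<^sup>2"
    by simp
  ultimately show ?thesis
    unfolding riesz_energy_def qnorm_power2[symmetric] by (simp add: power2_eq_square algebra_simps)
qed

lemma riesz_energy_parallelogram:
  "re_ip (a - b) (a - b) =
     4 * (riesz_energy a + riesz_energy b - 2 * riesz_energy (csmul (of_real (1/2)) (a + b)))"
  unfolding riesz_energy_def
  by (simp add: re_ip_csmul_real_left re_ip_csmul_real_right g_scale g_add re_ip_add_self re_ip_diff_self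
      algebra_simps del: of_real_divide) (simp add: field_simps)

lemma riesz_energy_le:
  "riesz_energy a \<le> riesz_energy b + qnorm ip (a - b) * (2 * qnorm ip a + qnorm ip (a - b)) / 2
     + C * qnorm ip (a - b)"
proof -
  have "re_ip a a - re_ip b b = re_ip (a - b) (a + b)"
    by (simp add: re_ip_diff_left re_ip_add_right re_ip_commute[of a b])
  also have "\<dots> \<le> qnorm ip (a - b) * qnorm ip (a + b)"
    using re_ip_cauchy_schwarz by (simp add: abs_le_iff)
  also have "\<dots> \<le> qnorm ip (a - b) * (2 * qnorm ip a + qnorm ip (a - b))"
  proof -
    have "qnorm ip (a + b) \<le> qnorm ip (a + a) + qnorm ip (a - b)"
      using qnorm_diff_le[of "a + a" "a - b"] by simp
    then have "qnorm ip (a + b) \<le> 2 * qnorm ip a + qnorm ip (a - b)"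
      using qnorm_triangle[of a a] by simp
    then show ?thesis
      by (simp add: mult_left_mono qnorm_nonneg)
  qed
  finally have "re_ip a a - re_ip b b \<le> qnorm ip (a - b) * (2 * qnorm ip a + qnorm ip (a - b))" .
  moreover have "g b - g a \<le> C * qnorm ip (a - b)"
    using g_bound[of "b - a"] g_add[of "b - a" a] by (simp add: qnorm_minus_commute)
  ultimately show ?thesis
    unfolding riesz_energy_def by simp
qed

lemma riesz_energy_has_minimizer: "\<exists>L. \<forall>x. riesz_energy L \<le> riesz_energy x"
proof -
  define m where "m = Inf (range riesz_energy)"
  have bdd: "bdd_below (range riesz_energy)"
    using riesz_energy_lower_bound by (intro bdd_belowI[of _ "- C\<^sup>2 / 2"]) auto
  have m_le: "m \<le> riesz_energy x" for x
    unfolding m_def by (rule cInf_lower[OF _ bdd]) simp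
  have "\<exists>x. riesz_energy x < m + 1 / real (Suc k)" for k
    using cInf_less_iff[OF _ bdd, of "m + 1 / real (Suc k)"] by (simp add: m_def)
  then obtain X where X: "\<And>k. riesz_energy (X k) < m + 1 / real (Suc k)"
    by metis
  have "(qnorm ip (X k - X l))\<^sup>2 \<le> 4 / real (Suc k) + 4 / real (Suc l)" for k l
    using riesz_energy_parallelogram[of "X k" "X l"] X[of k] X[of l]
      m_le[of "csmul (of_real (1/2)) (X k + X l)"]
    by (simp add: qnorm_power2)
  moreover have "(\<lambda>k. 4 / real (Suc k)) \<longlonglongrightarrow> 0"
    using LIMSEQ_Suc[OF lim_const_over_n[of "4 :: real"]] by simp
  ultimately obtain L where L: "(\<lambda>n. qnorm ip (X n - L)) \<longlonglongrightarrow> 0"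
    using qnorm_convergent_if_diff_square_le[of X "\<lambda>k. 4 / real (Suc k)"] by blast
  define d where "d n = qnorm ip (L - X n)" for n
  have "d = (\<lambda>n. qnorm ip (X n - L))"
    by (rule ext) (simp add: d_def qnorm_minus_commute[of L])
  with L have "d \<longlonglongrightarrow> 0"
    by simp
  then have "(\<lambda>n. m + 1 / real (Suc n) + d n * (2 * qnorm ip L + d n) / 2 + C * d n) \<longlonglongrightarrow>
      m + 0 + 0 * (2 * qnorm ip L + 0) / 2 + C * 0"
    by (intro tendsto_intros LIMSEQ_Suc[OF lim_inverse_n']) simp_all
  moreover have "riesz_energy L \<le> m + 1 / real (Suc n) + d n * (2 * qnorm ip L + d n) / 2 + C * d n"
    for n
    using riesz_energy_le[of L "X n"] X[of n] by (simp add: d_def)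
  ultimately have "riesz_energy L \<le> m"
    by (intro LIMSEQ_le_const) auto
  then show ?thesis
    using m_le order_trans by blast
qed

lemma riesz_energy_minimizer_represents:
  assumes min: "\<And>x. riesz_energy L \<le> riesz_energy x"
  shows "g h = re_ip h L"
proof (rule ccontr)
  assume "g h \<noteq> re_ip h L"
  define a where "a = re_ip h L - g h"
  define b where "b = re_ip h h"
  define t where "t = - a / (b + 1)"
  have "a \<noteq> 0" "0 \<le> b"
    using \<open>g h \<noteq> re_ip h L\<close> by (simp_all add: a_def b_def re_ip_self_nonneg)
  have "re_ip (L + csmul (of_real t) h) (L + csmul (of_real t) h) = re_ip L L + 2 * t * re_ip h L + t * t * b"
    by (simp add: b_def re_ip_add_self re_ip_csmul_real_left re_ip_csmul_real_right re_ip_commute[of L h])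
  moreover have "g (L + csmul (of_real t) h) = g L + t * g h"
    by (simp add: g_add g_scale)
  ultimately have "riesz_energy (L + csmul (of_real t) h) - riesz_energy L = t * a + t\<^sup>2 / 2 * b"
    unfolding riesz_energy_def a_def by (simp add: power2_eq_square algebra_simps)
  also have "\<dots> = - a\<^sup>2 * (b + 2) / (2 * (b + 1)\<^sup>2)"
    using \<open>0 \<le> b\<close> by (simp add: t_def power2_eq_square divide_simps) (simp add: algebra_simps)
  also have "\<dots> < 0"
    using \<open>a \<noteq> 0\<close> \<open>0 \<le> b\<close> by (simp add: divide_neg_pos)
  finally show False
    using min[of "L + csmul (of_real t) h"] by simp
qed

lemma real_riesz_representation: "\<exists>z. \<forall>x. g x = re_ip x z"
  using riesz_energy_has_minimizer riesz_energy_minimizer_represents by blast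

end

lemma quat_riesz_representation:
  assumes f_lin: "\<And>x y q. f (smul x q + y) = f x * q + f y"
    and f_bound: "\<And>x. \<bar>qRe (f x)\<bar> \<le> C * qnorm ip x"
  shows "\<exists>z. \<forall>x. f x = ip x z"
proof -
  have f_add: "f (x + y) = f x + f y" for x y
    using f_lin[of x 1 y] by simp
  have f_smul: "f (smul x q) = f x * q" for x q
    using f_lin[of x q 0] f_add[of 0 0] by simp
  obtain z where z: "\<And>x. qRe (f x) = re_ip x z"
    using real_riesz_representation[of "\<lambda>x. qRe (f x)" C]
    by (auto simp: f_add f_smul csmul_def f_bound)
  have Re_mult: "qRe (f x * q) = qRe (ip x z * q)" for x q
    using z[of "smul x q"] by (simp add: f_smul re_ip_def ip_smul_left)
  \<comment> \<open>the real parts of \<open>p * q\<close> for \<open>q = -i, -j, -k\<close> are the imaginary components of \<open>p\<close>\<close>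
  have "f x = ip x z" for x
    using Re_mult[of x "Quat 0 (-1) 0 0"] Re_mult[of x "Quat 0 0 (-1) 0"]
      Re_mult[of x "Quat 0 0 0 (-1)"] z[of x]
    by (intro quat_eqI) (simp_all add: re_ip_def)
  then show ?thesis
    by blast
qed

lemma ip_right_cancel: "(\<And>x. ip x a = ip x b) \<Longrightarrow> a = b"
  using ip_self_eq_0[of "a - b"] by (simp add: ip_diff_right)

lemma qadjoint_ip:
  assumes "bounded_right_linear smul ip T"
  shows "ip (T x) y = ip x (qadjoint ip T y)"
proof -
  obtain a where T: "right_linear smul T" "op_bound T a"
    using assms by (rule bounded_right_linearE)
  have "\<exists>z. \<forall>x. ip (T x) y = ip x z" for y
  proof (rule quat_riesz_representation)
    show "ip (T (smul x q + x')) y = ip (T x) y * q + ip (T x') y" for x x' q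
      using T(1) by (simp add: right_linear_def ip_smul_add_left)
    have "\<bar>qRe (ip (T x) y)\<bar> \<le> qnorm ip (T x) * qnorm ip y" for x
      using re_ip_cauchy_schwarz by (simp add: re_ip_def)
    also have "\<dots> x \<le> a * qnorm ip x * qnorm ip y" for x
      using T(2) qnorm_nonneg by (simp add: op_boundD mult_right_mono)
    finally show "\<bar>qRe (ip (T x) y)\<bar> \<le> (a * qnorm ip y) * qnorm ip x" for x
      by (simp add: ac_simps)
  qed
  then obtain A where A: "\<And>x y. ip (T x) y = ip x (A y)"
    by metis
  have "qadjoint ip T = A"
    unfolding qadjoint_def
  proof (rule the_equality)
    show "\<forall>x y. ip (T x) y = ip x (A y)"
      using A by blast
    show "A' = A" if "\<forall>x y. ip (T x) y = ip x (A' y)" for A'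
      using that A by (intro ext ip_right_cancel) metis
  qed
  with A show ?thesis
    by simp
qed

lemma qadjoint_re_ip:
  "bounded_right_linear smul ip T \<Longrightarrow> re_ip (T x) y = re_ip x (qadjoint ip T y)"
  by (simp add: re_ip_def qadjoint_ip)

lemma right_linear_qadjoint:
  assumes "bounded_right_linear smul ip T"
  shows "right_linear smul (qadjoint ip T)"
  unfolding right_linear_def
proof (intro allI)
  fix y y' q
  show "qadjoint ip T (smul y q + y') = smul (qadjoint ip T y) q + qadjoint ip T y'"
    by (rule ip_right_cancel) (simp add: qadjoint_ip[OF assms, symmetric] ip_add_right ip_smul_right)
qed

lemma qnormal_qnorm_qadjoint:
  assumes "bounded_right_linear smul ip T" "qnormal ip T"
  shows "qnorm ip (qadjoint ip T x) = qnorm ip (T x)"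
proof -
  let ?A = "qadjoint ip T"
  have "re_ip (?A x) (?A x) = re_ip (T (?A x)) x"
    by (rule qadjoint_re_ip[OF assms(1), symmetric])
  also have "\<dots> = re_ip (?A (T x)) x"
    using assms(2) by (simp add: qnormal_def comp_def fun_eq_iff)
  also have "\<dots> = re_ip (T x) (T x)"
    by (simp add: qadjoint_re_ip[OF assms(1)] re_ip_commute[of "?A (T x)"])
  finally show ?thesis
    by (simp add: qnorm_eq_sqrt_re_ip)
qed

definition adjoint_pair :: "('h \<Rightarrow> 'h) \<Rightarrow> ('h \<Rightarrow> 'h) \<Rightarrow> bool" where
  "adjoint_pair N A \<longleftrightarrow> right_linear smul N \<and> right_linear smul A \<and> (\<forall>x y. re_ip (N x) y = re_ip x (A y))"

lemma adjoint_pair_sym: "adjoint_pair N A \<Longrightarrow> adjoint_pair A N"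
  by (simp add: adjoint_pair_def re_ip_commute)

lemma adjoint_pair_qadjoint: "bounded_right_linear smul ip T \<Longrightarrow> adjoint_pair T (qadjoint ip T)"
  unfolding adjoint_pair_def
  by (simp add: right_linear_qadjoint qadjoint_re_ip) (simp add: bounded_right_linear_def right_linear_def)

lemma qnormal_commute: "qnormal ip T \<Longrightarrow> T (qadjoint ip T x) = qadjoint ip T (T x)"
  by (simp add: qnormal_def fun_eq_iff)

lemma op_bound_qadjoint:
  "bounded_right_linear smul ip T \<Longrightarrow> qnormal ip T \<Longrightarrow> op_bound T a \<Longrightarrow> op_bound (qadjoint ip T) a"
  by (simp add: op_bound_def qnormal_qnorm_qadjoint)

end

section \<open>Operator-valued polynomials\<close>

type_synonym 'a op_poly = "(nat \<times> ('a \<Rightarrow> 'a)) list"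

definition op_poly_comp :: "'a op_poly \<Rightarrow> 'a op_poly \<Rightarrow> 'a op_poly" where
  "op_poly_comp ps qs = [(d + e, C \<circ> D). (d, C) \<leftarrow> ps, (e, D) \<leftarrow> qs]"

definition op_poly_pow :: "'a op_poly \<Rightarrow> nat \<Rightarrow> 'a op_poly" where
  "op_poly_pow ps n = (op_poly_comp ps ^^ n) [(0, id)]"

lemma op_poly_comp_Cons:
  "op_poly_comp ((d, C) # ps) qs = map (\<lambda>(e, D). (d + e, C \<circ> D)) qs @ op_poly_comp ps qs"
  by (simp add: op_poly_comp_def split_def)

lemma op_poly_pow_Suc: "op_poly_pow ps (Suc n) = op_poly_comp ps (op_poly_pow ps n)"
  by (simp only: op_poly_pow_def funpow.simps comp_apply)

context quat_hilbert
begin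

definition op_poly_eval :: "'h op_poly \<Rightarrow> complex \<Rightarrow> 'h \<Rightarrow> 'h" where
  "op_poly_eval ps z x = (\<Sum>(d, C)\<leftarrow>ps. csmul (z ^ d) (C x))"

definition op_poly_coeff :: "'h op_poly \<Rightarrow> nat \<Rightarrow> 'h \<Rightarrow> 'h" where
  "op_poly_coeff ps k x = (\<Sum>(d, C)\<leftarrow>ps. if d = k then C x else 0)"

definition linear_op_poly :: "'h op_poly \<Rightarrow> bool" where
  "linear_op_poly ps \<longleftrightarrow> (\<forall>(d, C) \<in> set ps. right_linear smul C)"

lemma linear_op_poly_comp:
  "linear_op_poly ps \<Longrightarrow> linear_op_poly qs \<Longrightarrow> linear_op_poly (op_poly_comp ps qs)"
  by (auto simp: linear_op_poly_def op_poly_comp_def intro: right_linear_comp[unfolded comp_def])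

lemma linear_op_poly_pow: "linear_op_poly ps \<Longrightarrow> linear_op_poly (op_poly_pow ps n)"
  by (induction n) (simp_all add: op_poly_pow_def linear_op_poly_comp,
      simp add: linear_op_poly_def right_linear_id)

lemma op_poly_eval_comp:
  assumes "linear_op_poly ps"
  shows "op_poly_eval (op_poly_comp ps qs) z x = op_poly_eval ps z (op_poly_eval qs z x)"
  using assms
proof (induction ps)
  case Nil
  then show ?case
    by (simp add: op_poly_eval_def op_poly_comp_def)
next
  case (Cons p ps)
  obtain d C where p: "p = (d, C)"
    by fastforce
  with Cons.prems have C: "right_linear smul C" and ps: "linear_op_poly ps"
    by (simp_all add: linear_op_poly_def)
  have "(\<Sum>(e, D)\<leftarrow>qs. csmul (z ^ (d + e)) (C (D x))) = csmul (z ^ d) (C (op_poly_eval qs z x))"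
    by (induction qs) (auto simp: op_poly_eval_def right_linear_add right_linear_zero
        right_linear_csmul[OF C] csmul_add csmul_csmul power_add mult.commute C)
  then show ?case
    using Cons.IH[OF ps] by (simp add: p op_poly_comp_Cons op_poly_eval_def split_def comp_def)
qed

lemma op_poly_coeff_comp:
  assumes "linear_op_poly ps"
  shows "op_poly_coeff (op_poly_comp ps qs) k x =
    (\<Sum>i\<le>k. op_poly_coeff ps i (op_poly_coeff qs (k - i) x))"
  using assms
proof (induction ps)
  case Nil
  then show ?case
    by (simp add: op_poly_coeff_def op_poly_comp_def)
next
  case (Cons p ps)
  obtain d C where p: "p = (d, C)"
    by fastforce
  with Cons.prems have C: "right_linear smul C" and ps: "linear_op_poly ps"
    by (simp_all add: linear_op_poly_def)
  have "(\<Sum>(e, D)\<leftarrow>qs. if d + e = k then C (D x) else 0) =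
      (\<Sum>i\<le>k. if d = i then C (op_poly_coeff qs (k - i) x) else 0)"
  proof (cases "d \<le> k")
    case True
    have "(\<Sum>(e, D)\<leftarrow>qs. if d + e = k then C (D x) else 0) = C (op_poly_coeff qs (k - d) x)"
      using True by (induction qs) (auto simp: op_poly_coeff_def right_linear_add[OF C]
          right_linear_zero[OF C])
    then show ?thesis
      using True by simp
  next
    case False
    then show ?thesis
      by (induction qs) auto
  qed
  then show ?case
    using Cons.IH[OF ps]
    by (simp add: p op_poly_comp_Cons op_poly_coeff_def split_def comp_def sum.distrib
        if_distrib[of C] right_linear_sum_list[OF C] right_linear_zero[OF C] cong: if_cong)
qed

lemma op_poly_coeff_comp_1:
  assumes "linear_op_poly ps"
  shows "op_poly_coeff (op_poly_comp ps qs) 1 x =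
    op_poly_coeff ps 0 (op_poly_coeff qs 1 x) + op_poly_coeff ps 1 (op_poly_coeff qs 0 x)"
  by (simp add: op_poly_coeff_comp[OF assms] atMost_Suc)

lemma op_poly_eval_pow:
  assumes "linear_op_poly ps"
  shows "op_poly_eval (op_poly_pow ps n) z x = (op_poly_eval ps z ^^ n) x"
proof (induction n arbitrary: x)
  case 0
  then show ?case
    by (simp add: op_poly_pow_def op_poly_eval_def)
next
  case (Suc n)
  then show ?case
    by (simp add: op_poly_pow_Suc op_poly_eval_comp[OF assms])
qed

lemma op_poly_coeff_pow:
  assumes "linear_op_poly ps" and "\<And>x. op_poly_coeff ps 0 x = x"
  shows "op_poly_coeff (op_poly_pow ps n) 0 x = x"
    and "op_poly_coeff (op_poly_pow ps n) 1 x = csmul (of_nat n) (op_poly_coeff ps 1 x)"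
proof -
  have "\<forall>x. op_poly_coeff (op_poly_pow ps n) 0 x = x \<and>
    op_poly_coeff (op_poly_pow ps n) 1 x = csmul (of_nat n) (op_poly_coeff ps 1 x)"
  proof (induction n)
    case 0
    then show ?case
      by (simp add: op_poly_pow_def op_poly_coeff_def)
  next
    case (Suc n)
    then show ?case
      by (simp add: op_poly_pow_Suc op_poly_coeff_comp[OF assms(1)] assms(2) csmul_scalar_add
          add.commute)
  qed
  then show "op_poly_coeff (op_poly_pow ps n) 0 x = x"
    and "op_poly_coeff (op_poly_pow ps n) 1 x = csmul (of_nat n) (op_poly_coeff ps 1 x)"
    by simp_all
qed

lemma complex_ip_op_poly_eval: "complex_ip (op_poly_eval ps z x) y = (\<Sum>(d, C)\<leftarrow>ps. complex_ip (C x) y * z ^ d)"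
  by (induction ps) (auto simp: op_poly_eval_def complex_ip_add_left complex_ip_csmul_left)

lemma complex_ip_op_poly_eval_has_derivative:
  "((\<lambda>z. complex_ip (op_poly_eval ps z x) y) has_field_derivative complex_ip (op_poly_coeff ps 1 x) y) (at 0)"
proof (induction ps)
  case Nil
  then show ?case
    by (simp add: op_poly_eval_def op_poly_coeff_def)
next
  case (Cons p ps)
  obtain d C where p: "p = (d, C)"
    by fastforce
  have "((\<lambda>z. complex_ip (C x) y * z ^ d) has_field_derivative
      complex_ip (C x) y * (of_nat d * 0 ^ (d - 1))) (at 0)"
    using DERIV_cmult[OF DERIV_power[OF DERIV_ident], of "complex_ip (C x) y" d 0 UNIV] by simp
  moreover have "complex_ip (C x) y * (of_nat d * 0 ^ (d - 1)) = complex_ip (if d = 1 then C x else 0) y"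
    by (cases d) (auto simp: complex_ip_def complex_eq_iff)
  ultimately show ?case
    using DERIV_add[OF _ Cons.IH]
    by (simp add: p complex_ip_op_poly_eval op_poly_coeff_def complex_ip_add_left)
qed

lemma complex_ip_op_poly_eval_holomorphic: "(\<lambda>z. complex_ip (op_poly_eval ps z x) y) holomorphic_on A"
  unfolding complex_ip_op_poly_eval by (induction ps) (auto intro!: holomorphic_intros)

lemma complex_ip_op_poly_coeff_1_le:
  assumes "0 < r" and "\<And>z. cmod z = r \<Longrightarrow> cmod (complex_ip (op_poly_eval ps z x) y) \<le> B"
  shows "cmod (complex_ip (op_poly_coeff ps 1 x) y) \<le> B / r"
proof -
  let ?f = "\<lambda>z. complex_ip (op_poly_eval ps z x) y"
  have "cmod ((deriv ^^ 1) ?f 0) \<le> fact 1 * B / r ^ 1"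
    using assms complex_ip_op_poly_eval_holomorphic
    by (intro Cauchy_inequality holomorphic_on_imp_continuous_on) auto
  moreover have "deriv ?f 0 = complex_ip (op_poly_coeff ps 1 x) y"
    by (rule DERIV_imp_deriv[OF complex_ip_op_poly_eval_has_derivative])
  ultimately show ?thesis
    by simp
qed

end

section \<open>Perturbations of the identity\<close>

lemma funpow_intertwine:
  assumes "\<And>x. f (s x) = s (g x)"
  shows "(f ^^ n) (s x) = s ((g ^^ n) x)"
  by (induction n) (simp_all add: assms)

lemma funpow_comp_commute:
  assumes "\<And>x. f (g x) = g (f x)"
  shows "((\<lambda>x. f (g x)) ^^ n) x = (f ^^ n) ((g ^^ n) x)"
proof (induction n arbitrary: x)
  case (Suc n)
  have "(f ^^ n) (g y) = g ((f ^^ n) y)" for y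
    using funpow_intertwine[of f g f n y] assms by simp
  then show ?case
    by (simp add: Suc.IH)
qed simp

lemma funpow_sandwich_split:
  fixes X Y S Z1 Z2 Z2' :: "'a::ab_group_add \<Rightarrow> 'a"
  assumes X_add: "\<And>u v. X (u + v) = X u + X v" and S_add: "\<And>u v. S (u + v) = S u + S v"
    and X_Z1: "\<And>u. X (Z1 u) = Z1 (X u)" and Z1_S: "\<And>u. Z1 (S u) = S (Z2 u)"
    and Z2'_Y: "\<And>u. Z2' (Y u) = Y (Z2' u)" and Z2_Z2': "\<And>u. Z2 (Z2' u) = Z2' (Z2 u)"
  shows "(X ^^ n) (S ((Y ^^ n) x)) =
    ((\<lambda>u. X (Z1 u)) ^^ n) (S (((\<lambda>u. Z2' (Y u)) ^^ n) x)) +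
    (X ^^ n) (S ((Y ^^ n) x - ((\<lambda>u. Z2 (Z2' u)) ^^ n) ((Y ^^ n) x)))"
proof -
  define u where "u = (Y ^^ n) x"
  define v where "v = ((\<lambda>u. Z2 (Z2' u)) ^^ n) u"
  have Xn_add: "(X ^^ n) (a + b) = (X ^^ n) a + (X ^^ n) b" for a b
    by (induction n) (simp_all add: X_add)
  have "((\<lambda>u. X (Z1 u)) ^^ n) (S (((\<lambda>u. Z2' (Y u)) ^^ n) x)) =
      (X ^^ n) ((Z1 ^^ n) (S ((Z2' ^^ n) u)))"
    by (simp only: funpow_comp_commute[of X Z1, OF X_Z1] funpow_comp_commute[of Z2' Y, OF Z2'_Y] u_def)
  also have "\<dots> = (X ^^ n) (S v)"
    by (simp only: funpow_intertwine[of Z1 S Z2, OF Z1_S] funpow_comp_commute[of Z2 Z2', OF Z2_Z2'] v_def)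
  finally have "((\<lambda>u. X (Z1 u)) ^^ n) (S (((\<lambda>u. Z2' (Y u)) ^^ n) x)) = (X ^^ n) (S v)" .
  moreover have "(X ^^ n) (S u) = (X ^^ n) (S v) + (X ^^ n) (S (u - v))"
    using S_add[of v "u - v"] by (simp add: Xn_add[symmetric])
  ultimately show ?thesis
    by (simp add: u_def v_def)
qed

context quat_hilbert
begin

definition id_plus :: "complex \<Rightarrow> ('h \<Rightarrow> 'h) \<Rightarrow> 'h \<Rightarrow> 'h" where
  "id_plus w T x = x + csmul w (T x)"

lemma id_plus_add: "right_linear smul T \<Longrightarrow> id_plus w T (x + y) = id_plus w T x + id_plus w T y"
  by (simp add: id_plus_def right_linear_add csmul_add ac_simps)

lemma id_plus_commute:
  assumes "right_linear smul A" "right_linear smul B" "\<And>x. A (B x) = B (A x)"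
  shows "id_plus a A (id_plus b B x) = id_plus b B (id_plus a A x)"
  using assms by (simp add: id_plus_def right_linear_add right_linear_csmul csmul_add csmul_csmul
      mult.commute ac_simps)

lemma id_plus_intertwine:
  assumes "right_linear smul S" "\<And>x. A (S x) = S (B x)"
  shows "id_plus a A (S x) = S (id_plus a B x)"
  using assms by (simp add: id_plus_def right_linear_add right_linear_csmul)

lemma id_plus_uminus_id_plus:
  assumes "right_linear smul T"
  shows "id_plus (- w) T (id_plus w T x) = x - csmul (w\<^sup>2) (T (T x))"
  using assms by (simp add: id_plus_def right_linear_add right_linear_csmul csmul_add
      csmul_uminus_scalar csmul_csmul power2_eq_square)

lemma op_bound_id_plus_defect:
  assumes "right_linear smul N" "op_bound N a" "0 \<le> a"
  shows "op_bound (\<lambda>u. id_plus (- v) N (id_plus v N u) - u) ((cmod v * a)\<^sup>2)"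
  unfolding op_bound_def
proof
  fix u
  have "qnorm ip (id_plus (- v) N (id_plus v N u) - u) = (cmod v)\<^sup>2 * qnorm ip (N (N u))"
    using id_plus_uminus_id_plus[OF assms(1), of v u] by (simp add: qnorm_minus qnorm_csmul norm_power)
  also have "\<dots> \<le> (cmod v)\<^sup>2 * (a * (a * qnorm ip u))"
    using op_boundD[OF assms(2), of "N u"] op_boundD[OF assms(2), of u] assms(3)
    by (intro mult_left_mono) (simp_all add: mult_left_mono order_trans)
  finally show "qnorm ip (id_plus (- v) N (id_plus v N u) - u) \<le> (cmod v * a)\<^sup>2 * qnorm ip u"
    by (simp add: power2_eq_square ac_simps)
qed

lemma op_bound_id_plus: "op_bound T a \<Longrightarrow> op_bound (id_plus w T) (1 + cmod w * a)"
  unfolding op_bound_def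
proof
  fix x
  assume "\<forall>x. qnorm ip (T x) \<le> a * qnorm ip x"
  then have "qnorm ip (id_plus w T x) \<le> qnorm ip x + cmod w * (a * qnorm ip x)"
    using qnorm_triangle[of x "csmul w (T x)"]
    by (simp add: id_plus_def qnorm_csmul) (meson mult_left_mono norm_ge_zero order_trans add_left_mono)
  then show "qnorm ip (id_plus w T x) \<le> (1 + cmod w * a) * qnorm ip x"
    by (simp add: algebra_simps)
qed

lemma op_bound_funpow_minus_id:
  assumes f_add: "\<And>x y. f (x + y) = f x + f y"
    and f_bound: "op_bound (\<lambda>x. f x - x) e" and "0 \<le> e"
  shows "op_bound (\<lambda>x. (f ^^ n) x - x) ((1 + e) ^ n - 1)"
  unfolding op_bound_def
proof
  fix u
  show "qnorm ip ((f ^^ n) u - u) \<le> ((1 + e) ^ n - 1) * qnorm ip u"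
  proof (induction n)
    case (Suc n)
    define d where "d = (f ^^ n) u - u"
    have "f d = f ((f ^^ n) u) - f u"
      using f_add[of d u] by (simp add: d_def)
    then have "(f ^^ Suc n) u - u = d + (f d - d) + (f u - u)"
      by (simp add: d_def algebra_simps)
    then have "qnorm ip ((f ^^ Suc n) u - u) \<le> qnorm ip d + qnorm ip (f d - d) + qnorm ip (f u - u)"
      by (metis qnorm_triangle add_right_mono order_trans)
    also have "\<dots> \<le> (1 + e) * qnorm ip d + e * qnorm ip u"
      using f_bound op_boundD[OF f_bound, of d] op_boundD[OF f_bound, of u] by (simp add: algebra_simps)
    also have "\<dots> \<le> (1 + e) * (((1 + e) ^ n - 1) * qnorm ip u) + e * qnorm ip u"
      using Suc \<open>0 \<le> e\<close> by (simp add: d_def)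
    also have "\<dots> = ((1 + e) ^ Suc n - 1) * qnorm ip u"
      by (simp add: algebra_simps)
    finally show ?case .
  qed simp
qed

lemma re_ip_skew_part_eq_0:
  assumes "adjoint_pair N A"
  shows "re_ip x (csmul w (A x) - csmul (cnj w) (N x)) = 0"
proof -
  from assms have N: "right_linear smul N" and adj: "\<And>x y. re_ip (N x) y = re_ip x (A y)"
    by (simp_all add: adjoint_pair_def)
  have "re_ip x (csmul w (A x)) = re_ip (N (csmul (cnj w) x)) x"
    by (simp add: re_ip_csmul_right adj re_ip_commute[of x])
  also have "\<dots> = re_ip x (csmul (cnj w) (N x))"
    by (simp add: right_linear_csmul[OF N] re_ip_commute)
  finally show ?thesis
    by (simp add: re_ip_diff_right)
qed

lemma op_bound_near_unitary:
  assumes adj: "adjoint_pair N A"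
    and N_bound: "op_bound N a" and A_bound: "op_bound A a" and "0 \<le> a"
  shows "op_bound (\<lambda>x. id_plus w A (id_plus (- cnj w) N x)) (1 + 5 * (cmod w * a)\<^sup>2)"
  unfolding op_bound_def
proof
  fix x
  from adj have A: "right_linear smul A"
    by (simp add: adjoint_pair_def)
  define b where "b = cmod w * a"
  have "0 \<le> b"
    using \<open>0 \<le> a\<close> by (simp add: b_def)
  define v where "v = csmul w (A x) - csmul (cnj w) (N x)"
  define e where "e = csmul w (A (csmul (cnj w) (N x)))"
  have "id_plus w A (id_plus (- cnj w) N x) = (x + v) - e"
    by (simp add: id_plus_def v_def e_def csmul_uminus_scalar right_linear_add[OF A]
        right_linear_diff[OF A] csmul_add csmul_diff)
  moreover have "re_ip x v = 0"
    unfolding v_def using adj by (rule re_ip_skew_part_eq_0)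
  moreover have "qnorm ip v \<le> 2 * b * qnorm ip x"
  proof -
    have "qnorm ip v \<le> cmod w * qnorm ip (A x) + cmod w * qnorm ip (N x)"
      using qnorm_diff_le[of "csmul w (A x)" "csmul (cnj w) (N x)"] by (simp add: v_def qnorm_csmul)
    also have "\<dots> \<le> cmod w * (a * qnorm ip x) + cmod w * (a * qnorm ip x)"
      using op_boundD[OF A_bound] op_boundD[OF N_bound] by (intro add_mono mult_left_mono) simp_all
    finally show ?thesis
      by (simp add: b_def algebra_simps)
  qed
  moreover have "qnorm ip e \<le> b\<^sup>2 * qnorm ip x"
  proof -
    have "qnorm ip e \<le> cmod w * (a * (cmod w * qnorm ip (N x)))"
      using op_boundD[OF A_bound, of "csmul (cnj w) (N x)"]
      by (simp add: e_def qnorm_csmul mult_left_mono)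
    also have "\<dots> \<le> cmod w * (a * (cmod w * (a * qnorm ip x)))"
      using op_boundD[OF N_bound] \<open>0 \<le> a\<close> by (simp add: mult_left_mono)
    finally show ?thesis
      by (simp add: b_def power2_eq_square ac_simps)
  qed
  ultimately have "qnorm ip (id_plus w A (id_plus (- cnj w) N x)) \<le>
      (1 + (2 * b)\<^sup>2) * qnorm ip x + b\<^sup>2 * qnorm ip x"
    using qnorm_add_orthogonal_le[of x v "2 * b"] qnorm_diff_le[of "x + v" e] by simp
  then show "qnorm ip (id_plus w A (id_plus (- cnj w) N x)) \<le> (1 + 5 * b\<^sup>2) * qnorm ip x"
    by (simp add: algebra_simps)
qed

end

lemma one_plus_power_le_exp: "0 \<le> t \<Longrightarrow> (1 + t) ^ n \<le> exp (real n * t)"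
  by (metis exp_ge_add_one_self exp_of_nat_mult add_nonneg_nonneg zero_le_one power_mono)

definition sandwich_growth :: "real \<Rightarrow> real \<Rightarrow> nat \<Rightarrow> real \<Rightarrow> real" where
  "sandwich_growth a1 a2 n \<rho> =
    (1 + 5 * (\<rho> * a1)\<^sup>2) ^ n * (1 + 5 * (\<rho> * a2)\<^sup>2) ^ n +
    (1 + \<rho> * a1) ^ n * ((1 + (\<rho> * a2)\<^sup>2) ^ n - 1) * (1 + \<rho> * a2) ^ n"

lemma sandwich_growth_eventually_le_2:
  fixes a1 a2 r :: real
  assumes "0 \<le> a1" "0 \<le> a2" "0 \<le> r"
  shows "\<forall>\<^sub>F n in sequentially. sandwich_growth a1 a2 n (r / n) \<le> 2"
proof -
  define g where "g n = exp (5 * (r * a1)\<^sup>2 / n) * exp (5 * (r * a2)\<^sup>2 / n) +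
    exp (r * a1) * (exp ((r * a2)\<^sup>2 / n) - 1) * exp (r * a2)" for n :: nat
  have n_scale: "real n * (c * (r * a / n)\<^sup>2) = c * (r * a)\<^sup>2 / n" for n and c a :: real
    by (cases "n = 0") (simp_all add: power2_eq_square)
  have "sandwich_growth a1 a2 n (r / n) \<le> g n" for n
  proof -
    have "(1 + c * (r / n * a)\<^sup>2) ^ n \<le> exp (c * (r * a)\<^sup>2 / n)" if "0 \<le> c" for c a
      using one_plus_power_le_exp[of "c * (r / n * a)\<^sup>2" n] that by (simp add: n_scale)
    from this[of 5 a1] this[of 5 a2] this[of 1 a2]
    have p1: "(1 + 5 * (r / n * a1)\<^sup>2) ^ n * (1 + 5 * (r / n * a2)\<^sup>2) ^ n \<le>
        exp (5 * (r * a1)\<^sup>2 / n) * exp (5 * (r * a2)\<^sup>2 / n)"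
      and p2: "(1 + (r / n * a2)\<^sup>2) ^ n - 1 \<le> exp ((r * a2)\<^sup>2 / n) - 1"
      by (simp_all add: mult_mono)
    have "(1 + r / n * a) ^ n \<le> exp (r * a)" if "0 \<le> a" for a
      using one_plus_power_le_exp[of "r / n * a" n] that assms by (cases "n = 0") simp_all
    from this[of a1] this[of a2] assms have
      "(1 + r / n * a1) ^ n * ((1 + (r / n * a2)\<^sup>2) ^ n - 1) * (1 + r / n * a2) ^ n \<le>
        exp (r * a1) * (exp ((r * a2)\<^sup>2 / n) - 1) * exp (r * a2)"
      by (intro mult_mono p2) simp_all
    with p1 show ?thesis
      unfolding g_def sandwich_growth_def by (rule add_mono)
  qed
  moreover have "g \<longlonglongrightarrow> exp 0 * exp 0 + exp (r * a1) * (exp 0 - 1) * exp (r * a2)"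
    unfolding g_def by (intro tendsto_intros)
  then have "\<forall>\<^sub>F n in sequentially. g n < 2"
    by (rule order_tendstoD) simp
  ultimately show ?thesis
    by (elim eventually_mono) (meson less_imp_le order_trans)
qed

lemma nonpos_if_le_divide_all_pos:
  fixes c K :: real
  assumes "\<And>r. 0 < r \<Longrightarrow> c \<le> K / r"
  shows "c \<le> 0"
proof (rule ccontr)
  assume "\<not> c \<le> 0"
  then have "c \<le> K / ((\<bar>K\<bar> + 1) / c)"
    by (intro assms) simp
  also have "\<dots> = c * (K / (\<bar>K\<bar> + 1))"
    by simp
  also have "\<dots> < c * 1"
    using \<open>\<not> c \<le> 0\<close> by (intro mult_strict_left_mono) simp_all
  finally show False
    by simp
qed

section \<open>The Fuglede--Putnam theorem\<close>

definition id_plus_poly :: "('a \<Rightarrow> 'a) \<Rightarrow> 'a op_poly" where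
  "id_plus_poly T = [(0, id), (1, T)]"

definition sandwich_poly :: "('a::uminus \<Rightarrow> 'a) \<Rightarrow> ('a \<Rightarrow> 'a) \<Rightarrow> ('a \<Rightarrow> 'a) \<Rightarrow> nat \<Rightarrow> 'a op_poly" where
  "sandwich_poly A S B n = op_poly_comp (op_poly_pow (id_plus_poly A) n)
     (op_poly_comp [(0, S)] (op_poly_pow (id_plus_poly (\<lambda>x. - B x)) n))"

context quat_hilbert
begin

lemma linear_id_plus_poly: "right_linear smul T \<Longrightarrow> linear_op_poly (id_plus_poly T)"
  by (simp add: id_plus_poly_def linear_op_poly_def right_linear_id)

lemma op_poly_eval_id_plus_poly: "op_poly_eval (id_plus_poly T) w x = id_plus w T x"
  by (simp add: id_plus_poly_def op_poly_eval_def id_plus_def)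

lemma op_poly_coeff_id_plus_poly:
  "op_poly_coeff (id_plus_poly T) 0 x = x" "op_poly_coeff (id_plus_poly T) 1 x = T x"
  by (simp_all add: id_plus_poly_def op_poly_coeff_def)

lemma linear_op_poly_const: "right_linear smul S \<Longrightarrow> linear_op_poly [(0, S)]"
  by (simp add: linear_op_poly_def)

context
  fixes A S B :: "'h \<Rightarrow> 'h"
  assumes A: "right_linear smul A" and S: "right_linear smul S" and B: "right_linear smul B"
begin

lemma op_poly_eval_sandwich_poly:
  "op_poly_eval (sandwich_poly A S B n) w x = (id_plus w A ^^ n) (S ((id_plus (- w) B ^^ n) x))"
proof -
  have "id_plus w (\<lambda>x. - B x) = id_plus (- w) B"
    by (simp add: fun_eq_iff id_plus_def csmul_minus csmul_uminus_scalar)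
  then show ?thesis
    using linear_id_plus_poly[OF A] linear_id_plus_poly[OF right_linear_uminus[OF B]]
    by (simp add: sandwich_poly_def op_poly_eval_comp linear_op_poly_pow linear_op_poly_const[OF S]
        op_poly_eval_pow op_poly_eval_id_plus_poly[abs_def]) (simp add: op_poly_eval_def)
qed

lemma op_poly_coeff_1_sandwich_poly:
  "op_poly_coeff (sandwich_poly A S B n) 1 x = csmul (of_nat n) (A (S x) - S (B x))"
proof -
  let ?X = "op_poly_pow (id_plus_poly A) n" and ?Y = "op_poly_pow (id_plus_poly (\<lambda>x. - B x)) n"
  have X: "op_poly_coeff ?X 0 x = x" "op_poly_coeff ?X 1 x = csmul (of_nat n) (A x)" for x
    by (simp_all only: op_poly_coeff_pow[OF linear_id_plus_poly[OF A] op_poly_coeff_id_plus_poly(1)]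
        op_poly_coeff_id_plus_poly)
  have Y: "op_poly_coeff ?Y 0 x = x" "op_poly_coeff ?Y 1 x = - csmul (of_nat n) (B x)" for x
    by (simp_all only: op_poly_coeff_pow[OF linear_id_plus_poly[OF right_linear_uminus[OF B]]
        op_poly_coeff_id_plus_poly(1)] op_poly_coeff_id_plus_poly csmul_minus)
  have SY: "op_poly_coeff (op_poly_comp [(0, S)] ?Y) k x = S (op_poly_coeff ?Y k x)" for k
    by (simp add: op_poly_coeff_comp linear_op_poly_const[OF S]) (simp add: op_poly_coeff_def)
  have "op_poly_coeff (sandwich_poly A S B n) 1 x =
      op_poly_coeff ?X 0 (S (op_poly_coeff ?Y 1 x)) + op_poly_coeff ?X 1 (S (op_poly_coeff ?Y 0 x))"
    by (simp only: sandwich_poly_def op_poly_coeff_comp_1 linear_op_poly_pow linear_id_plus_poly A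
        SY)
  then show ?thesis
    by (simp add: X Y right_linear_minus[OF S] right_linear_csmul[OF S] csmul_diff del: One_nat_def)
qed

end

end

context quat_hilbert
begin

context
  fixes N1 A1 N2 A2 S :: "'h \<Rightarrow> 'h" and a1 a2 s :: real
  assumes pair1: "adjoint_pair N1 A1" and comm1: "\<And>x. N1 (A1 x) = A1 (N1 x)"
    and pair2: "adjoint_pair N2 A2" and comm2: "\<And>x. N2 (A2 x) = A2 (N2 x)"
    and bound1: "op_bound N1 a1" "op_bound A1 a1" "0 \<le> a1"
    and bound2: "op_bound N2 a2" "op_bound A2 a2" "0 \<le> a2"
    and S: "right_linear smul S" "op_bound S s" "0 \<le> s"
    and intertwine: "\<And>x. N1 (S x) = S (N2 x)"
begin

text \<open>
  Inserting \<open>(1 - cnj w N1) ^ n\<close>, which passes through \<open>S\<close> as \<open>(1 - cnj w N2) ^ n\<close>, and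
  \<open>(1 + cnj w N2) ^ n\<close> pairs every factor with its near-unitary partner; the second summand
  records that \<open>1 - cnj w N2\<close> only approximately inverts \<open>1 + cnj w N2\<close>.
\<close>

lemma sandwich_split:
  "(id_plus w A1 ^^ n) (S ((id_plus (- w) A2 ^^ n) x)) =
    ((\<lambda>u. id_plus w A1 (id_plus (- cnj w) N1 u)) ^^ n)
      (S (((\<lambda>u. id_plus (cnj w) N2 (id_plus (- w) A2 u)) ^^ n) x)) +
    (id_plus w A1 ^^ n) (S ((id_plus (- w) A2 ^^ n) x -
      ((\<lambda>u. id_plus (- cnj w) N2 (id_plus (cnj w) N2 u)) ^^ n) ((id_plus (- w) A2 ^^ n) x)))"
proof -
  from pair1 pair2 have N1: "right_linear smul N1" and A1: "right_linear smul A1"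
    and N2: "right_linear smul N2" and A2: "right_linear smul A2"
    by (simp_all add: adjoint_pair_def)
  show ?thesis
    using id_plus_commute[of A1 N1, OF A1 N1 comm1[symmetric]]
      id_plus_commute[of N2 A2, OF N2 A2 comm2] id_plus_commute[of N2 N2, OF N2 N2 refl]
      id_plus_intertwine[of S N1 N2, OF S(1) intertwine]
    by (intro funpow_sandwich_split) (simp_all add: id_plus_add A1 N2 S right_linear_add)
qed

lemma op_bound_sandwich_unitary_part:
  "op_bound (\<lambda>u. ((\<lambda>u. id_plus w A1 (id_plus (- cnj w) N1 u)) ^^ n)
      (S (((\<lambda>u. id_plus (cnj w) N2 (id_plus (- w) A2 u)) ^^ n) u)))
    ((1 + 5 * (cmod w * a1)\<^sup>2) ^ n * (s * (1 + 5 * (cmod w * a2)\<^sup>2) ^ n))"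
proof -
  have "op_bound (\<lambda>u. id_plus (cnj w) N2 (id_plus (- w) A2 u)) (1 + 5 * (cmod w * a2)\<^sup>2)"
    using op_bound_near_unitary[OF adjoint_pair_sym[OF pair2] bound2(2,1,3), of "cnj w"] by simp
  then show ?thesis
    using S(3) op_bound_near_unitary[OF pair1 bound1, of w]
    by (intro op_bound_comp op_bound_funpow S(2)) simp_all
qed

lemma op_bound_sandwich_defect_part:
  "op_bound (\<lambda>u. (id_plus w A1 ^^ n) (S ((id_plus (- w) A2 ^^ n) u -
      ((\<lambda>u. id_plus (- cnj w) N2 (id_plus (cnj w) N2 u)) ^^ n) ((id_plus (- w) A2 ^^ n) u))))
    ((1 + cmod w * a1) ^ n * (s * (((1 + (cmod w * a2)\<^sup>2) ^ n - 1) * (1 + cmod w * a2) ^ n)))"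
proof -
  from pair2 have N2: "right_linear smul N2"
    by (simp add: adjoint_pair_def)
  have "op_bound (\<lambda>u. ((\<lambda>u. id_plus (- cnj w) N2 (id_plus (cnj w) N2 u)) ^^ n) u - u)
      ((1 + (cmod w * a2)\<^sup>2) ^ n - 1)"
    using op_bound_id_plus_defect[OF N2 bound2(1,3), of "cnj w"]
    by (intro op_bound_funpow_minus_id) (simp_all add: id_plus_add N2)
  then have "op_bound (\<lambda>u. u - ((\<lambda>u. id_plus (- cnj w) N2 (id_plus (cnj w) N2 u)) ^^ n) u)
      ((1 + (cmod w * a2)\<^sup>2) ^ n - 1)"
    by (simp add: op_bound_def qnorm_minus_commute)
  then show ?thesis
    using S(3) bound1(3) bound2(3) op_bound_id_plus[OF bound1(2), of w]
      op_bound_id_plus[OF bound2(2), of "- w"]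
    by (intro op_bound_comp[where T = "id_plus w A1 ^^ n"] op_bound_comp[where T = S]
        op_bound_comp[where U = "id_plus (- w) A2 ^^ n"] op_bound_funpow S(2)) simp_all
qed

lemma qnorm_sandwich_poly_le:
  "qnorm ip (op_poly_eval (sandwich_poly A1 S A2 n) w x) \<le>
    s * sandwich_growth a1 a2 n (cmod w) * qnorm ip x"
proof -
  from pair1 pair2 have A1: "right_linear smul A1" and A2: "right_linear smul A2"
    by (simp_all add: adjoint_pair_def)
  have "qnorm ip (op_poly_eval (sandwich_poly A1 S A2 n) w x) \<le>
      (1 + 5 * (cmod w * a1)\<^sup>2) ^ n * (s * (1 + 5 * (cmod w * a2)\<^sup>2) ^ n) * qnorm ip x +
      (1 + cmod w * a1) ^ n * (s * (((1 + (cmod w * a2)\<^sup>2) ^ n - 1) * (1 + cmod w * a2) ^ n)) *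
        qnorm ip x"
    unfolding op_poly_eval_sandwich_poly[OF A1 S(1) A2] sandwich_split
    using qnorm_triangle op_boundD[OF op_bound_sandwich_unitary_part[where w = w and n = n], where x = x]
      op_boundD[OF op_bound_sandwich_defect_part[where w = w and n = n], where x = x]
    by (rule order_trans[OF _ add_mono])
  then show ?thesis
    by (simp add: sandwich_growth_def algebra_simps)
qed

lemma norm_complex_ip_defect_le:
  assumes "0 < r"
  shows "cmod (complex_ip (A1 (S x) - S (A2 x)) y) \<le> 4 * s * qnorm ip x * qnorm ip y / r"
proof -
  from pair1 pair2 have A1: "right_linear smul A1" and A2: "right_linear smul A2"
    by (simp_all add: adjoint_pair_def)
  obtain N where N: "\<And>n. N \<le> n \<Longrightarrow> sandwich_growth a1 a2 n (r / n) \<le> 2"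
    using sandwich_growth_eventually_le_2[OF bound1(3) bound2(3) less_imp_le[OF \<open>0 < r\<close>]]
    unfolding eventually_sequentially by blast
  define n where "n = Suc N"
  let ?P = "sandwich_poly A1 S A2 n"
  \<comment> \<open>Cauchy's estimate on the circle of radius \<open>r / n\<close>\<close>
  have "cmod (complex_ip (op_poly_coeff ?P 1 x) y) \<le> 4 * s * qnorm ip x * qnorm ip y / (r / n)"
  proof (rule complex_ip_op_poly_coeff_1_le)
    show "0 < r / n"
      using \<open>0 < r\<close> by (simp add: n_def)
    fix w
    assume "cmod w = r / n"
    then have "s * sandwich_growth a1 a2 n (cmod w) * qnorm ip x \<le> s * 2 * qnorm ip x"
      using N[of n] S(3) qnorm_nonneg by (intro mult_right_mono mult_left_mono) (simp_all add: n_def)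
    then have "2 * qnorm ip (op_poly_eval ?P w x) * qnorm ip y \<le> 2 * (s * 2 * qnorm ip x) * qnorm ip y"
      using qnorm_sandwich_poly_le[of n w x] qnorm_nonneg by (intro mult_right_mono mult_left_mono) simp_all
    then show "cmod (complex_ip (op_poly_eval ?P w x) y) \<le> 4 * s * qnorm ip x * qnorm ip y"
      using norm_complex_ip_le[of "op_poly_eval ?P w x" y] by (simp add: algebra_simps)
  qed
  also have "\<dots> = real n * (4 * s * qnorm ip x * qnorm ip y / r)"
    by simp
  also have "cmod (complex_ip (op_poly_coeff ?P 1 x) y) = real n * cmod (complex_ip (A1 (S x) - S (A2 x)) y)"
    unfolding op_poly_coeff_1_sandwich_poly[OF A1 S(1) A2] by (simp add: complex_ip_csmul_left norm_mult)
  finally show ?thesis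
    by (rule mult_left_le_imp_le) (simp add: n_def)
qed

lemma intertwines_adjoints: "A1 (S x) = S (A2 x)"
proof -
  define D where "D = A1 (S x) - S (A2 x)"
  have "cmod (complex_ip D D) \<le> 0"
    using norm_complex_ip_defect_le[of _ x D]
    by (intro nonpos_if_le_divide_all_pos[where K = "4 * s * qnorm ip x * qnorm ip D"])
      (simp add: D_def)
  then have "re_ip D D = 0"
    by (metis Re_complex_ip norm_le_zero_iff zero_complex.sel(1))
  then show ?thesis
    using re_ip_self_eq_0[of D] by (simp add: D_def)
qed

end

theorem fuglede_putnam:
  assumes T1: "bounded_right_linear smul ip T1" "qnormal ip T1"
    and T2: "bounded_right_linear smul ip T2" "qnormal ip T2"
    and S: "bounded_right_linear smul ip S"
    and intertwine: "T1 \<circ> S = S \<circ> T2"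
  shows "qadjoint ip T1 \<circ> S = S \<circ> qadjoint ip T2"
proof -
  obtain a1 where a1: "0 \<le> a1" "op_bound T1 a1"
    using T1(1) by (rule bounded_right_linearE)
  obtain a2 where a2: "0 \<le> a2" "op_bound T2 a2"
    using T2(1) by (rule bounded_right_linearE)
  obtain s where s: "right_linear smul S" "0 \<le> s" "op_bound S s"
    using S by (rule bounded_right_linearE)
  show ?thesis
    using intertwines_adjoints[OF adjoint_pair_qadjoint[OF T1(1)] qnormal_commute[OF T1(2)]
        adjoint_pair_qadjoint[OF T2(1)] qnormal_commute[OF T2(2)]
        a1(2) op_bound_qadjoint[OF T1 a1(2)] a1(1) a2(2) op_bound_qadjoint[OF T2 a2(2)] a2(1)
        s(1,3,2)] intertwine
    by (simp add: fun_eq_iff)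
qed

end

theorem mainTheorem8:
  fixes smul :: "'h::ab_group_add \<Rightarrow> quat \<Rightarrow> 'h"
    and ip :: "'h \<Rightarrow> 'h \<Rightarrow> quat"
    and T1 T2 S :: "'h \<Rightarrow> 'h"
  assumes "right_quat_hilbert smul ip"
    and "bounded_right_linear smul ip T1" and "qnormal ip T1"
    and "bounded_right_linear smul ip T2" and "qnormal ip T2"
    and "bounded_right_linear smul ip S"
    and "T1 \<circ> S = S \<circ> T2"
  shows "qadjoint ip T1 \<circ> S = S \<circ> qadjoint ip T2"
proof -
  interpret quat_hilbert smul ip
    by (rule quat_hilbert.intro) (rule assms(1))
  show ?thesis
    using assms(2-7) by (rule fuglede_putnam)
qed

end
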